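(* Let $L\subseteq\Sigma^\omega$ be of the form $L=\bigcup_{i=1}^n U_iV_i^\omega$ where each $U_i\subseteq\Sigma^*$ is Parikh-recognizable and each $V_i\subseteq\Sigma^*$ is regular. Then $L$ is RPBA-recognizable.
   Context: For $V\subseteq\Sigma^*$, $V^\omega=\{w_1w_2\cdots\mid w_i\in V\setminus\{\varepsilon\}\}$. A semi-linear set in $\mathbb{N}^d$ is a finite union of sets $\{b_0+\sum_{j=1}^\ell b_jz_j\mid z_j\in\mathbb{N}\}$ with $b_j\in\mathbb{N}^d$. A Parikh automaton (PA) of dimension $d$ is $(Q,\Sigma,q_0,\Delta,F,C)$ with finite $Q$, $q_0\in Q$, $F\subseteq Q$, finite $\Delta\subseteq Q\times\Sigma\times\mathbb{N}^d\times Q$, semi-linear $C\subseteq\mathbb{N}^d$; it accepts a finite word $x_1\cdots x_n$ if there is a run $r_i=(p_{i-1},x_i,\mathbf{v}_i,p_i)\in\Delta$, $p_0=q_0$, with $p_n\in F$ and $\sum_i\mathbf{v}_i\in C$; Parikh-recognizable languages are those accepted by PA. A reachability Parikh–Büchi automaton (RPBA) is a PA read on infinite words: a run $r_1r_2\cdots$ ($r_i=(p_{i-1},\alpha_i,\mathbf{v}_i,p_i)\in\Delta$, $p_0=q_0$) is accepting if there is $i\ge1$ with $p_i\in F$ and $\sum_{k\le i}\mathbf{v}_k\in C$, and there are infinitely many $j$ with $p_j\in F$. $L$ is RPBA-recognizable if it is the set of infinite words with an accepting run of some RPBA. *)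

theory Defs
  imports Main
begin

(* Finite words: 'a list.  Infinite words: nat \<Rightarrow> 'a.
   Vectors of N^d: nat lists of length d.  Automaton states: nat. *)

definition vadd :: "nat list \<Rightarrow> nat list \<Rightarrow> nat list" where
  "vadd u v = map2 (+) u v"

definition vsum :: "nat \<Rightarrow> nat list list \<Rightarrow> nat list" where
  "vsum d vs = foldr vadd vs (replicate d 0)"

definition linear_set :: "nat \<Rightarrow> nat list \<Rightarrow> nat list list \<Rightarrow> nat list set" where
  "linear_set d b0 Bs =
     {vadd b0 (vsum d (map2 (\<lambda>b z. map (\<lambda>x. z * x) b) Bs zs)) | zs. length zs = length Bs}"

definition semilinear :: "nat \<Rightarrow> nat list set \<Rightarrow> bool" where
  "semilinear d C \<longleftrightarrow> (\<exists>S. finite S \<and>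
     (\<forall>(b0, Bs) \<in> S. length b0 = d \<and> (\<forall>b \<in> set Bs. length b = d)) \<and>
     C = (\<Union>(b0, Bs) \<in> S. linear_set d b0 Bs))"

record 'a pa =
  dim :: nat
  states :: "nat set"
  init :: nat
  trans :: "(nat \<times> 'a \<times> nat list \<times> nat) set"
  final :: "nat set"
  constr :: "nat list set"

definition pa_wf :: "'a set \<Rightarrow> 'a pa \<Rightarrow> bool" where
  "pa_wf \<Sigma> A \<longleftrightarrow> finite (states A) \<and> init A \<in> states A \<and> final A \<subseteq> states A \<and>
     finite (trans A) \<and>
     (\<forall>(p, a, v, q) \<in> trans A. p \<in> states A \<and> a \<in> \<Sigma> \<and> length v = dim A \<and> q \<in> states A) \<and>
     semilinear (dim A) (constr A)"

definition pa_accepts :: "'a pa \<Rightarrow> 'a list \<Rightarrow> bool" where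
  "pa_accepts A w \<longleftrightarrow> (\<exists>(p :: nat \<Rightarrow> nat) (vs :: nat list list).
     length vs = length w \<and> p 0 = init A \<and>
     (\<forall>i < length w. (p i, w ! i, vs ! i, p (Suc i)) \<in> trans A) \<and>
     p (length w) \<in> final A \<and> vsum (dim A) vs \<in> constr A)"

definition parikh_recognizable :: "'a set \<Rightarrow> 'a list set \<Rightarrow> bool" where
  "parikh_recognizable \<Sigma> U \<longleftrightarrow> (\<exists>A. pa_wf \<Sigma> A \<and> U = {w. pa_accepts A w})"

definition rpba_accepts :: "'a pa \<Rightarrow> (nat \<Rightarrow> 'a) \<Rightarrow> bool" where
  "rpba_accepts A \<alpha> \<longleftrightarrow> (\<exists>(p :: nat \<Rightarrow> nat) (vs :: nat \<Rightarrow> nat list).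
     p 0 = init A \<and>
     (\<forall>i. (p i, \<alpha> i, vs i, p (Suc i)) \<in> trans A) \<and>
     (\<exists>i \<ge> 1. p i \<in> final A \<and> vsum (dim A) (map vs [0..<i]) \<in> constr A) \<and>
     (\<exists>\<^sub>\<infinity>j. p j \<in> final A))"

definition rpba_recognizable :: "'a set \<Rightarrow> (nat \<Rightarrow> 'a) set \<Rightarrow> bool" where
  "rpba_recognizable \<Sigma> L \<longleftrightarrow> (\<exists>A. pa_wf \<Sigma> A \<and> L = {\<alpha>. rpba_accepts A \<alpha>})"

definition regular :: "'a set \<Rightarrow> 'a list set \<Rightarrow> bool" where
  "regular \<Sigma> V \<longleftrightarrow> (\<exists>(Q :: nat set) q0 (\<delta> :: (nat \<times> 'a \<times> nat) set) F.
     finite Q \<and> q0 \<in> Q \<and> F \<subseteq> Q \<and> \<delta> \<subseteq> Q \<times> \<Sigma> \<times> Q \<and>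
     V = {w. \<exists>p :: nat \<Rightarrow> nat. p 0 = q0 \<and>
            (\<forall>i < length w. (p i, w ! i, p (Suc i)) \<in> \<delta>) \<and> p (length w) \<in> F})"

(* V^omega = { w1 w2 ... | w_i in V - {eps} } *)
definition omega_iter :: "'a list set \<Rightarrow> (nat \<Rightarrow> 'a) set" where
  "omega_iter V = {\<alpha>. \<exists>ws :: nat \<Rightarrow> 'a list. (\<forall>i. ws i \<in> V - {[]}) \<and>
      (\<forall>i. map \<alpha> [sum_list (map (length \<circ> ws) [0..<i]) ..< sum_list (map (length \<circ> ws) [0..<Suc i])] = ws i)}"

definition conc_inf :: "'a list \<Rightarrow> (nat \<Rightarrow> 'a) \<Rightarrow> (nat \<Rightarrow> 'a)" where
  "conc_inf u \<beta> = (\<lambda>n. if n < length u then u ! n else \<beta> (n - length u))"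

definition lang_conc :: "'a list set \<Rightarrow> (nat \<Rightarrow> 'a) set \<Rightarrow> (nat \<Rightarrow> 'a) set" where
  "lang_conc U W = {conc_inf u \<beta> | u \<beta>. u \<in> U \<and> \<beta> \<in> W}"

end

theory Submission
  imports Defs "HOL-Library.Infinite_Set" "HOL-Library.Nat_Bijection"
begin

text \<open>
  RPBA-recognizable languages are closed under finite unions: one automaton guesses in its first
  step which of the given automata to simulate, and an extra counter set in that step records the
  guess, so that each constraint set is only consulted on runs of its own automaton.

  For \<open>U V\<^sup>\<omega>\<close>, a PA for \<open>U\<close> is followed by an NFA for \<open>V\<close> which is restarted in its initial
  state every time it completes a factor; a dedicated state, the only accepting one, marks these
  restarts. All counters stay zero after the PA phase, so the reachability condition, met at some
  restart, is exactly acceptance of the prefix by the PA, while the Buchi condition demands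
  infinitely many factors.
\<close>

section \<open>Vector sums and semilinear sets\<close>

lemma length_vadd [simp]: "length (vadd u v) = min (length u) (length v)"
  by (simp add: vadd_def)

lemma vsum_Nil [simp]: "vsum d [] = replicate d 0"
  by (simp add: vsum_def)

lemma vsum_Cons [simp]: "vsum d (v # vs) = vadd v (vsum d vs)"
  by (simp add: vsum_def)

lemma length_vsum: "\<forall>v\<in>set vs. length v = d \<Longrightarrow> length (vsum d vs) = d"
  by (induction vs) auto

lemma vadd_append: "length a = length c \<Longrightarrow> vadd (a @ b) (c @ e) = vadd a c @ vadd b e"
  by (simp add: vadd_def)

lemma vadd_replicate_zero: "length u = d \<Longrightarrow> vadd u (replicate d 0) = u"
  by (induction u arbitrary: d) (auto simp: vadd_def)

lemma vsum_replicate_zero: "vsum d (map (\<lambda>_. replicate d 0) xs) = replicate d 0"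
  by (induction xs) (auto simp: vadd_replicate_zero)

lemma vsum_append_zero:
  "vsum d ys = replicate d 0 \<Longrightarrow> vsum d (xs @ ys) = vsum d xs"
  by (simp add: vsum_def)

lemma vsum_map_append:
  assumes "\<forall>x\<in>set xs. length (f x) = d1"
  shows "vsum (d1 + d2) (map (\<lambda>x. f x @ g x) xs) = vsum d1 (map f xs) @ vsum d2 (map g xs)"
  using assms
proof (induction xs)
  case Nil
  then show ?case by (simp add: replicate_add)
next
  case (Cons x xs)
  then have "length (vsum d1 (map f xs)) = d1"
    by (intro length_vsum) auto
  with Cons show ?case by (simp add: vadd_append)
qed

lemma vsum_singletons: "vsum 1 (map (\<lambda>x. [f x]) xs) = [sum_list (map f xs)]"
  by (induction xs) (auto simp: vadd_def)

lemma vsum_map_append_tag: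
  assumes "\<forall>x\<in>set xs. length (f x) = d" "d \<le> D"
  shows "vsum (Suc D) (map (\<lambda>x. f x @ replicate (D - d) 0 @ [t x]) xs)
    = vsum d (map f xs) @ replicate (D - d) 0 @ [sum_list (map t xs)]"
proof -
  have "vsum (d + (D - d + 1)) (map (\<lambda>x. f x @ replicate (D - d) 0 @ [t x]) xs)
      = vsum d (map f xs) @ vsum (D - d + 1) (map (\<lambda>x. replicate (D - d) 0 @ [t x]) xs)"
    using assms(1) by (rule vsum_map_append)
  also have "vsum (D - d + 1) (map (\<lambda>x. replicate (D - d) 0 @ [t x]) xs)
      = vsum (D - d) (map (\<lambda>_. replicate (D - d) 0) xs) @ vsum 1 (map (\<lambda>x. [t x]) xs)"
    by (intro vsum_map_append) simp
  also have "\<dots> = replicate (D - d) 0 @ [sum_list (map t xs)]"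
    by (simp only: vsum_replicate_zero vsum_singletons)
  finally show ?thesis
    using assms(2) by simp
qed

lemma vsum_upt_zero_tail:
  assumes "k \<le> i" "\<And>m. k \<le> m \<Longrightarrow> vs m = replicate d 0"
  shows "vsum d (map vs [0..<i]) = vsum d (map vs [0..<k])"
proof -
  have "map vs [k..<i] = map (\<lambda>_. replicate d 0) [k..<i]"
    using assms(2) by simp
  then have "vsum d (map vs [k..<i]) = replicate d 0"
    by (simp only: vsum_replicate_zero)
  moreover have "[0..<i] = [0..<k] @ [k..<i]"
    using upt_add_eq_append[of 0 k "i - k"] assms(1) by simp
  ultimately show ?thesis
    by (simp add: vsum_append_zero)
qed

lemma sum_list_upt_if_0: "0 < k \<Longrightarrow> sum_list (map (\<lambda>n. if n = 0 then c else 0) [0..<k]) = c"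
  by (induction k) auto

lemma semilinear_UN:
  assumes "finite I" "\<forall>i\<in>I. semilinear d (C i)"
  shows "semilinear d (\<Union>i\<in>I. C i)"
proof -
  obtain S where S: "\<forall>i\<in>I. finite (S i) \<and>
      (\<forall>(b0, Bs)\<in>S i. length b0 = d \<and> (\<forall>b\<in>set Bs. length b = d)) \<and>
      C i = (\<Union>(b0, Bs)\<in>S i. linear_set d b0 Bs)"
    using bchoice[OF assms(2)[unfolded semilinear_def]] by (elim exE) (rule that)
  have "(\<Union>i\<in>I. C i) = (\<Union>(b0, Bs)\<in>(\<Union>i\<in>I. S i). linear_set d b0 Bs)"
    using S by (simp add: UN_UN_flatten)
  moreover have "finite (\<Union>i\<in>I. S i)"
    using assms(1) S by simp
  moreover have "\<forall>(b0, Bs)\<in>(\<Union>i\<in>I. S i). length b0 = d \<and> (\<forall>b\<in>set Bs. length b = d)"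
    using S by fast
  ultimately show ?thesis
    unfolding semilinear_def by (intro exI[of _ "\<Union>i\<in>I. S i"]) simp
qed

lemma linear_set_append:
  assumes "length b0 = d" "\<forall>b\<in>set Bs. length b = d" "length w = e"
  shows "linear_set (d + e) (b0 @ w) (map (\<lambda>b. b @ replicate e 0) Bs)
    = (\<lambda>c. c @ w) ` linear_set d b0 Bs"
proof -
  have "vsum (d + e) (map2 (\<lambda>b z. map ((*) z) b) (map (\<lambda>b. b @ replicate e 0) Bs) zs)
      = vsum d (map2 (\<lambda>b z. map ((*) z) b) Bs zs) @ replicate e 0" for zs
  proof -
    have "map2 (\<lambda>b z. map ((*) z) b) (map (\<lambda>b. b @ replicate e 0) Bs) zs
        = map (\<lambda>x. map ((*) (snd x)) (fst x) @ replicate e 0) (zip Bs zs)"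
      by (simp add: zip_map1 case_prod_beta)
    also have "vsum (d + e) \<dots> = vsum d (map2 (\<lambda>b z. map ((*) z) b) Bs zs) @ replicate e 0"
      using assms(2) by (subst vsum_map_append)
        (auto simp: split_def vsum_replicate_zero dest: set_zip_leftD)
    finally show ?thesis .
  qed
  moreover have "length (vsum d (map2 (\<lambda>b z. map ((*) z) b) Bs zs)) = d" for zs
    using assms(2) by (intro length_vsum) (auto dest: set_zip_leftD)
  ultimately have "vadd (b0 @ w) (vsum (d + e) (map2 (\<lambda>b z. map ((*) z) b) (map (\<lambda>b. b @ replicate e 0) Bs) zs))
      = vadd b0 (vsum d (map2 (\<lambda>b z. map ((*) z) b) Bs zs)) @ w" for zs
    using assms(1,3) by (simp add: vadd_append vadd_replicate_zero)
  then show ?thesis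
    unfolding linear_set_def by (auto simp: image_iff)
qed

lemma semilinear_append:
  assumes "semilinear d C" "length w = e"
  shows "semilinear (d + e) ((\<lambda>c. c @ w) ` C)"
proof -
  obtain S where S: "finite S" "\<forall>(b0, Bs)\<in>S. length b0 = d \<and> (\<forall>b\<in>set Bs. length b = d)"
    "C = (\<Union>(b0, Bs)\<in>S. linear_set d b0 Bs)"
    using assms(1) unfolding semilinear_def by (elim exE conjE) (rule that)
  let ?S = "(\<lambda>(b0, Bs). (b0 @ w, map (\<lambda>b. b @ replicate e 0) Bs)) ` S"
  have "(\<lambda>c. c @ w) ` C = (\<Union>(b0, Bs)\<in>S. (\<lambda>c. c @ w) ` linear_set d b0 Bs)"
    using S(3) by (simp add: image_UN case_prod_beta)
  also have "\<dots> = (\<Union>(b0, Bs)\<in>S. linear_set (d + e) (b0 @ w) (map (\<lambda>b. b @ replicate e 0) Bs))"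
    using S(2) assms(2) by (intro SUP_cong refl) (auto simp: linear_set_append)
  also have "\<dots> = (\<Union>(b0, Bs)\<in>?S. linear_set (d + e) b0 Bs)"
    by (simp add: image_UN case_prod_beta)
  finally show ?thesis
    unfolding semilinear_def using S(1,2) assms(2) by (intro exI[of _ ?S]) fastforce
qed

section \<open>Parikh automata\<close>

lemma pa_wf_trans_length: "pa_wf \<Sigma> A \<Longrightarrow> (p, a, v, q) \<in> trans A \<Longrightarrow> length v = dim A"
  unfolding pa_wf_def by fast

lemma rpba_acceptsI:
  assumes "p 0 = init A" "\<forall>n. (p n, \<alpha> n, vs n, p (Suc n)) \<in> trans A"
    and "\<exists>\<^sub>\<infinity>n. p n \<in> final A \<and> vsum (dim A) (map vs [0..<n]) \<in> constr A"
  shows "rpba_accepts A \<alpha>"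
proof -
  obtain i where "0 < i" "p i \<in> final A \<and> vsum (dim A) (map vs [0..<i]) \<in> constr A"
    using assms(3) unfolding INFM_nat by blast
  moreover have "\<exists>\<^sub>\<infinity>j. p j \<in> final A"
    using assms(3) by (rule INFM_mono) simp
  ultimately show ?thesis
    unfolding rpba_accepts_def using assms(1,2) by (metis One_nat_def Suc_leI)
qed

section \<open>Finite unions\<close>

definition union_state :: "nat \<Rightarrow> nat \<Rightarrow> nat" where
  "union_state i q = Suc (prod_encode (i, q))"

lemma union_state_eq_iff [simp]: "union_state i p = union_state j q \<longleftrightarrow> i = j \<and> p = q"
  by (simp add: union_state_def)

lemma union_state_neq_0 [simp]: "union_state i q \<noteq> 0" "0 \<noteq> union_state i q"
  by (simp_all add: union_state_def)

text \<open>
  The last counter is set to \<open>i\<close> by the first transition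
  and never changed afterwards, so it tells which automaton a constraint vector belongs to.
\<close>

definition union_pa :: "nat \<Rightarrow> nat set \<Rightarrow> (nat \<Rightarrow> 'a pa) \<Rightarrow> 'a pa" where
  "union_pa D I A =
    \<lparr>dim = Suc D,
     states = insert 0 (\<Union>i\<in>I. union_state i ` states (A i)),
     init = 0,
     trans = {(0, a, v @ replicate (D - dim (A i)) 0 @ [i], union_state i q) | i a v q.
                i \<in> I \<and> (init (A i), a, v, q) \<in> trans (A i)}
           \<union> {(union_state i p, a, v @ replicate (D - dim (A i)) 0 @ [0], union_state i q) | i p a v q.
                i \<in> I \<and> (p, a, v, q) \<in> trans (A i)},
     final = (\<Union>i\<in>I. union_state i ` final (A i)),
     constr = (\<Union>i\<in>I. (\<lambda>c. c @ replicate (D - dim (A i)) 0 @ [i]) ` constr (A i))\<rparr>"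

lemma union_pa_simps [simp]:
  "dim (union_pa D I A) = Suc D"
  "init (union_pa D I A) = 0"
  "states (union_pa D I A) = insert 0 (\<Union>i\<in>I. union_state i ` states (A i))"
  by (simp_all add: union_pa_def)

lemma trans_union_pa_from_0:
  "(0, a, v, y) \<in> trans (union_pa D I A) \<longleftrightarrow>
    (\<exists>i\<in>I. \<exists>w q. (init (A i), a, w, q) \<in> trans (A i) \<and>
      v = w @ replicate (D - dim (A i)) 0 @ [i] \<and> y = union_state i q)"
  by (auto simp: union_pa_def)

lemma trans_union_pa_from_union_state:
  "(union_state i p, a, v, y) \<in> trans (union_pa D I A) \<longleftrightarrow>
    i \<in> I \<and> (\<exists>w q. (p, a, w, q) \<in> trans (A i) \<and>
      v = w @ replicate (D - dim (A i)) 0 @ [0] \<and> y = union_state i q)"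
  by (auto simp: union_pa_def)

lemma final_union_pa_iff:
  "0 \<notin> final (union_pa D I A)"
  "union_state i q \<in> final (union_pa D I A) \<longleftrightarrow> i \<in> I \<and> q \<in> final (A i)"
  by (auto simp: union_pa_def)

lemma constr_union_pa_iff:
  "i \<in> I \<Longrightarrow> c @ replicate (D - dim (A i)) 0 @ [i] \<in> constr (union_pa D I A) \<longleftrightarrow> c \<in> constr (A i)"
  by (auto simp: union_pa_def)

lemma pa_wf_union_pa:
  assumes "finite I" "\<forall>i\<in>I. pa_wf \<Sigma> (A i) \<and> dim (A i) \<le> D"
  shows "pa_wf \<Sigma> (union_pa D I A)"
proof -
  let ?T = "SIGMA i:I. trans (A i)"
  have "trans (union_pa D I A)
      \<subseteq> (\<lambda>(i, p, a, v, q). (0, a, v @ replicate (D - dim (A i)) 0 @ [i], union_state i q)) ` ?T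
        \<union> (\<lambda>(i, p, a, v, q). (union_state i p, a, v @ replicate (D - dim (A i)) 0 @ [0], union_state i q)) ` ?T"
    unfolding union_pa_def by (force intro: rev_image_eqI)
  moreover have "finite ?T"
    using assms unfolding pa_wf_def by blast
  ultimately have "finite (trans (union_pa D I A))"
    by (simp add: finite_subset)
  moreover have "semilinear (Suc D) ((\<lambda>c. c @ replicate (D - dim (A i)) 0 @ [i]) ` constr (A i))"
    if "i \<in> I" for i
  proof -
    have "semilinear (dim (A i) + (D - dim (A i) + 1)) ((\<lambda>c. c @ replicate (D - dim (A i)) 0 @ [i]) ` constr (A i))"
      using assms(2) that by (intro semilinear_append) (auto simp: pa_wf_def)
    moreover have "dim (A i) + (D - dim (A i) + 1) = Suc D"
      using assms(2) that by auto
    ultimately show ?thesis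
      by simp
  qed
  then have "semilinear (Suc D) (constr (union_pa D I A))"
    unfolding union_pa_def using assms(1) by (simp add: semilinear_UN)
  moreover have "\<forall>(p, a, v, q) \<in> trans (union_pa D I A).
      p \<in> states (union_pa D I A) \<and> a \<in> \<Sigma> \<and> length v = Suc D \<and> q \<in> states (union_pa D I A)"
    using assms(2) unfolding union_pa_def pa_wf_def by fastforce
  moreover have "final (union_pa D I A) \<subseteq> states (union_pa D I A)"
    using assms(2) unfolding union_pa_def pa_wf_def by fastforce
  moreover have "finite (states (union_pa D I A))"
    using assms unfolding pa_wf_def by simp
  ultimately show ?thesis
    unfolding pa_wf_def by simp
qed

lemma rpba_accepts_union_paI:
  assumes "i \<in> I" "pa_wf \<Sigma> (A i)" "dim (A i) \<le> D" "rpba_accepts (A i) \<alpha>"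
  shows "rpba_accepts (union_pa D I A) \<alpha>"
proof -
  obtain p vs where run: "p 0 = init (A i)" "\<forall>n. (p n, \<alpha> n, vs n, p (Suc n)) \<in> trans (A i)"
    and reach: "\<exists>k\<ge>1. p k \<in> final (A i) \<and> vsum (dim (A i)) (map vs [0..<k]) \<in> constr (A i)"
    and buchi: "\<exists>\<^sub>\<infinity>j. p j \<in> final (A i)"
    using assms(4) unfolding rpba_accepts_def by blast
  define p' where "p' n = (if n = 0 then 0 else union_state i (p n))" for n
  define vs' where "vs' = (\<lambda>n. vs n @ replicate (D - dim (A i)) 0 @ [if n = 0 then i else 0])"
  have len: "\<forall>n. length (vs n) = dim (A i)"
    using run(2) pa_wf_trans_length[OF assms(2)] by blast
  have "(p' n, \<alpha> n, vs' n, p' (Suc n)) \<in> trans (union_pa D I A)" for n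
  proof (cases n)
    case 0
    have "(0, \<alpha> 0, vs 0 @ replicate (D - dim (A i)) 0 @ [i], union_state i (p 1)) \<in> trans (union_pa D I A)"
      unfolding trans_union_pa_from_0 using run assms(1)
      by (intro bexI[of _ i] exI[of _ "vs 0"] exI[of _ "p 1"]) (simp_all add: run(1)[symmetric])
    with 0 show ?thesis
      by (simp add: p'_def vs'_def)
  next
    case (Suc m)
    then show ?thesis
      using run assms(1) by (simp add: p'_def vs'_def trans_union_pa_from_union_state)
  qed
  moreover have "\<exists>k\<ge>1. p' k \<in> final (union_pa D I A) \<and> vsum (Suc D) (map vs' [0..<k]) \<in> constr (union_pa D I A)"
  proof -
    obtain k where k: "k \<ge> 1" "p k \<in> final (A i)" "vsum (dim (A i)) (map vs [0..<k]) \<in> constr (A i)"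
      using reach by blast
    moreover have "p' k = union_state i (p k)"
      using k(1) by (simp add: p'_def)
    ultimately show ?thesis
      using assms(1,3) len
      by (intro exI[of _ k])
        (simp add: vs'_def vsum_map_append_tag sum_list_upt_if_0 final_union_pa_iff constr_union_pa_iff)
  qed
  moreover have "\<exists>\<^sub>\<infinity>j. p' j \<in> final (union_pa D I A)"
    using INFM_conjI[OF buchi MOST_neq(1)[of 0]]
    by (rule INFM_mono) (simp add: p'_def final_union_pa_iff assms(1))
  ultimately show ?thesis
    unfolding rpba_accepts_def by (intro exI[of _ p'] exI[of _ vs'] conjI) (simp_all add: p'_def)
qed

lemma union_pa_run_in_branch:
  assumes "p' 0 = 0" "\<forall>n. (p' n, \<alpha> n, vs' n, p' (Suc n)) \<in> trans (union_pa D I A)"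
  obtains i p vs where "i \<in> I" "p 0 = init (A i)" "\<forall>n. (p n, \<alpha> n, vs n, p (Suc n)) \<in> trans (A i)"
    "\<forall>n. p' (Suc n) = union_state i (p (Suc n))"
    "vs' = (\<lambda>n. vs n @ replicate (D - dim (A i)) 0 @ [if n = 0 then i else 0])"
proof -
  obtain i q where i: "i \<in> I" and q: "p' 1 = union_state i q"
    using assms(2)[rule_format, of 0] assms(1) by (auto simp: trans_union_pa_from_0)
  have "\<exists>q. p' (Suc n) = union_state i q" for n
  proof (induction n)
    case 0
    then show ?case using q by simp
  next
    case (Suc n)
    then show ?case
      using assms(2)[rule_format, of "Suc n"] by (auto simp: trans_union_pa_from_union_state)
  qed
  then obtain p0 where p0: "\<And>n. p' (Suc n) = union_state i (p0 n)"
    by metis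
  define p where "p n = (case n of 0 \<Rightarrow> init (A i) | Suc m \<Rightarrow> p0 m)" for n
  have p': "p' n = (if n = 0 then 0 else union_state i (p n))" for n
    using assms(1) p0 by (cases n) (simp_all add: p_def)
  have "\<exists>w. (p n, \<alpha> n, w, p (Suc n)) \<in> trans (A i) \<and>
      vs' n = w @ replicate (D - dim (A i)) 0 @ [if n = 0 then i else 0]" for n
    using assms(2)[rule_format, of n] unfolding p'
    by (cases n) (auto simp: p_def trans_union_pa_from_0 trans_union_pa_from_union_state)
  then obtain vs where "\<And>n. (p n, \<alpha> n, vs n, p (Suc n)) \<in> trans (A i)"
    and "\<And>n. vs' n = vs n @ replicate (D - dim (A i)) 0 @ [if n = 0 then i else 0]"
    by metis
  with i p' that[of i p vs] show ?thesis
    by (auto simp: p_def)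
qed

lemma rpba_accepts_union_paD:
  assumes "\<forall>i\<in>I. pa_wf \<Sigma> (A i) \<and> dim (A i) \<le> D" "rpba_accepts (union_pa D I A) \<alpha>"
  shows "\<exists>i\<in>I. rpba_accepts (A i) \<alpha>"
proof -
  obtain p' vs' where run': "p' 0 = 0" "\<forall>n. (p' n, \<alpha> n, vs' n, p' (Suc n)) \<in> trans (union_pa D I A)"
    and reach': "\<exists>k\<ge>1. p' k \<in> final (union_pa D I A) \<and> vsum (Suc D) (map vs' [0..<k]) \<in> constr (union_pa D I A)"
    and buchi': "\<exists>\<^sub>\<infinity>j. p' j \<in> final (union_pa D I A)"
    using assms(2) unfolding rpba_accepts_def by auto
  obtain i p vs where i: "i \<in> I" and run: "p 0 = init (A i)" "\<forall>n. (p n, \<alpha> n, vs n, p (Suc n)) \<in> trans (A i)"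
    and p': "\<forall>n. p' (Suc n) = union_state i (p (Suc n))"
    and vs': "vs' = (\<lambda>n. vs n @ replicate (D - dim (A i)) 0 @ [if n = 0 then i else 0])"
    by (rule union_pa_run_in_branch[OF run'])
  have wf: "pa_wf \<Sigma> (A i)" "dim (A i) \<le> D"
    using assms(1) i by auto
  have len: "\<forall>n. length (vs n) = dim (A i)"
    using run(2) pa_wf_trans_length[OF wf(1)] by blast
  have final: "p n \<in> final (A i)" if "p' n \<in> final (union_pa D I A)" for n
    using that i p' run'(1) by (cases n) (simp_all add: final_union_pa_iff)
  have "\<exists>k\<ge>1. p k \<in> final (A i) \<and> vsum (dim (A i)) (map vs [0..<k]) \<in> constr (A i)"
  proof -
    obtain k where k: "k \<ge> 1" "p' k \<in> final (union_pa D I A)" "vsum (Suc D) (map vs' [0..<k]) \<in> constr (union_pa D I A)"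
      using reach' by blast
    then have "vsum (dim (A i)) (map vs [0..<k]) \<in> constr (A i)"
      using i len wf(2) by (simp add: vs' vsum_map_append_tag sum_list_upt_if_0 constr_union_pa_iff)
    with k final show ?thesis
      by blast
  qed
  moreover have "\<exists>\<^sub>\<infinity>j. p j \<in> final (A i)"
    using buchi' by (rule INFM_mono) (rule final)
  ultimately have "rpba_accepts (A i) \<alpha>"
    unfolding rpba_accepts_def using run by blast
  with i show ?thesis ..
qed

lemma rpba_recognizable_UN:
  fixes I :: "nat set"
  assumes "finite I" "\<forall>i\<in>I. rpba_recognizable \<Sigma> (L i)"
  shows "rpba_recognizable \<Sigma> (\<Union>i\<in>I. L i)"
proof -
  obtain A where A: "\<forall>i\<in>I. pa_wf \<Sigma> (A i) \<and> L i = {\<alpha>. rpba_accepts (A i) \<alpha>}"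
    using bchoice[OF assms(2)[unfolded rpba_recognizable_def]] by (elim exE) (rule that)
  define D where "D = Max (dim ` A ` I)"
  have "dim (A i) \<le> D" if "i \<in> I" for i
    unfolding D_def using assms(1) that by (intro Max_ge) simp_all
  with A have wf: "\<forall>i\<in>I. pa_wf \<Sigma> (A i) \<and> dim (A i) \<le> D"
    by blast
  have "(\<Union>i\<in>I. L i) = {\<alpha>. rpba_accepts (union_pa D I A) \<alpha>}"
  proof (intro equalityI subsetI)
    fix \<alpha>
    assume "\<alpha> \<in> (\<Union>i\<in>I. L i)"
    then obtain i where "i \<in> I" "rpba_accepts (A i) \<alpha>"
      using A by blast
    with wf show "\<alpha> \<in> {\<alpha>. rpba_accepts (union_pa D I A) \<alpha>}"
      using rpba_accepts_union_paI by blast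
  next
    fix \<alpha>
    assume "\<alpha> \<in> {\<alpha>. rpba_accepts (union_pa D I A) \<alpha>}"
    then obtain i where "i \<in> I" "rpba_accepts (A i) \<alpha>"
      using rpba_accepts_union_paD[OF wf] by blast
    with A show "\<alpha> \<in> (\<Union>i\<in>I. L i)"
      by blast
  qed
  with pa_wf_union_pa[OF assms(1) wf] show ?thesis
    unfolding rpba_recognizable_def by blast
qed

section \<open>Omega-iteration of NFA languages\<close>

definition nfa_lang :: "nat \<Rightarrow> (nat \<times> 'a \<times> nat) set \<Rightarrow> nat set \<Rightarrow> 'a list set" where
  "nfa_lang s0 \<delta> F = {w. \<exists>r :: nat \<Rightarrow> nat. r 0 = s0 \<and>
     (\<forall>i < length w. (r i, w ! i, r (Suc i)) \<in> \<delta>) \<and> r (length w) \<in> F}"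

lemma omega_iter_iff_cuts:
  "\<beta> \<in> omega_iter V \<longleftrightarrow>
    (\<exists>T. strict_mono T \<and> T 0 = 0 \<and> (\<forall>i. map \<beta> [T i..<T (Suc i)] \<in> V))"
proof
  assume "\<beta> \<in> omega_iter V"
  then obtain ws where ws: "\<forall>i. ws i \<in> V - {[]}"
    "\<forall>i. map \<beta> [sum_list (map (length \<circ> ws) [0..<i])..<sum_list (map (length \<circ> ws) [0..<Suc i])] = ws i"
    unfolding omega_iter_def by blast
  define T where "T i = sum_list (map (length \<circ> ws) [0..<i])" for i
  have "T i < T (Suc i)" for i
    using ws(1) by (simp add: T_def)
  then have "strict_mono T"
    by (simp add: strict_mono_Suc_iff)
  moreover have "map \<beta> [T i..<T (Suc i)] \<in> V" for i
    using ws unfolding T_def by simp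
  ultimately show "\<exists>T. strict_mono T \<and> T 0 = 0 \<and> (\<forall>i. map \<beta> [T i..<T (Suc i)] \<in> V)"
    by (intro exI[of _ T]) (simp add: T_def)
next
  assume "\<exists>T. strict_mono T \<and> T 0 = 0 \<and> (\<forall>i. map \<beta> [T i..<T (Suc i)] \<in> V)"
  then obtain T where T: "strict_mono T" "T 0 = 0" "\<forall>i. map \<beta> [T i..<T (Suc i)] \<in> V"
    by blast
  define ws where "ws i = map \<beta> [T i..<T (Suc i)]" for i
  have lt: "T i < T (Suc i)" for i
    using T(1) by (simp add: strict_mono_Suc_iff)
  have sums: "sum_list (map (length \<circ> ws) [0..<i]) = T i" for i
  proof (induction i)
    case 0
    then show ?case using T(2) by simp
  next
    case (Suc i)
    then show ?case using lt[of i] by (simp add: ws_def)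
  qed
  show "\<beta> \<in> omega_iter V"
    unfolding omega_iter_def
  proof (intro CollectI exI[of _ ws] conjI allI)
    fix i
    show "ws i \<in> V - {[]}"
      using T(3) lt[of i] by (simp add: ws_def)
    show "map \<beta> [sum_list (map (length \<circ> ws) [0..<i])..<sum_list (map (length \<circ> ws) [0..<Suc i])] = ws i"
      unfolding sums ws_def ..
  qed
qed

lemma strict_mono_gap_notin_range:
  fixes T :: "nat \<Rightarrow> nat"
  assumes "strict_mono T" "T i < x" "x < T (Suc i)"
  shows "x \<notin> range T"
proof
  assume "x \<in> range T"
  then obtain k where "x = T k"
    by blast
  with assms have "i < k" "k < Suc i"
    using strict_mono_less[OF assms(1)] by auto
  then show False
    by simp
qed

lemma strict_mono_segment_index:
  fixes T :: "nat \<Rightarrow> nat"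
  assumes "strict_mono T" "T 0 = 0"
  obtains seg where "\<And>m i. seg m = i \<longleftrightarrow> T i \<le> m \<and> m < T (Suc i)"
proof -
  have lt: "T i < T (Suc i)" for i
    using assms(1) by (simp add: strict_mono_Suc_iff)
  have "\<exists>!i. T i \<le> m \<and> m < T (Suc i)" for m
  proof (rule ex_ex1I)
    show "\<exists>i. T i \<le> m \<and> m < T (Suc i)"
    proof (induction m)
      case 0
      then show ?case using assms(2) lt[of 0] by auto
    next
      case (Suc m)
      then obtain i where "T i \<le> m" "m < T (Suc i)"
        by blast
      then show ?case
        using lt[of "Suc i"] by (cases "Suc m = T (Suc i)") (auto intro: exI[of _ i] exI[of _ "Suc i"])
    qed
  next
    fix i j
    assume "T i \<le> m \<and> m < T (Suc i)" "T j \<le> m \<and> m < T (Suc j)"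
    then have "\<not> Suc i \<le> j" "\<not> Suc j \<le> i"
      using strict_mono_less_eq[OF assms(1)] by (metis le_trans not_le)+
    then show "i = j"
      by simp
  qed
  then have "(THE i. T i \<le> m \<and> m < T (Suc i)) = i \<longleftrightarrow> T i \<le> m \<and> m < T (Suc i)" for m i
    by (metis (mono_tags, lifting) the1_equality theI')
  then show ?thesis
    by (rule that)
qed

text \<open>
  A run of the NFA on \<open>\<beta>\<close> restarted at every position in \<open>S\<close>: the factors of \<open>\<beta>\<close> between
  consecutive positions in \<open>S\<close> are exactly the pieces of an \<open>\<omega>\<close>-iteration.
\<close>

definition restarting_run ::
    "nat \<Rightarrow> (nat \<times> 'a \<times> nat) set \<Rightarrow> nat set \<Rightarrow> (nat \<Rightarrow> 'a) \<Rightarrow> nat set \<Rightarrow> (nat \<Rightarrow> nat)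
      \<Rightarrow> bool" where
  "restarting_run s0 \<delta> F \<beta> S r \<longleftrightarrow> 0 \<in> S \<and> infinite S \<and> (\<forall>m\<in>S. r m = s0) \<and>
     (\<forall>m. if Suc m \<in> S then \<exists>f\<in>F. (r m, \<beta> m, f) \<in> \<delta>
          else (r m, \<beta> m, r (Suc m)) \<in> \<delta>)"

lemma restarting_run_segment:
  assumes run: "restarting_run s0 \<delta> F \<beta> S r"
    and ab: "a \<in> S" "b \<in> S" "a < b" "\<forall>j. a < j \<and> j < b \<longrightarrow> j \<notin> S"
  shows "map \<beta> [a..<b] \<in> nfa_lang s0 \<delta> F"
proof -
  have step: "if Suc m \<in> S then \<exists>f\<in>F. (r m, \<beta> m, f) \<in> \<delta>
      else (r m, \<beta> m, r (Suc m)) \<in> \<delta>" for m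
    using run unfolding restarting_run_def by blast
  obtain f where f: "f \<in> F" "(r (b - 1), \<beta> (b - 1), f) \<in> \<delta>"
    using step[of "b - 1"] ab(2,3) by (auto split: if_splits)
  define \<rho> where "\<rho> j = (if j < b - a then r (a + j) else f)" for j
  have "(\<rho> j, \<beta> (a + j), \<rho> (Suc j)) \<in> \<delta>" if "j < b - a" for j
  proof (cases "Suc j < b - a")
    case True
    then have "Suc (a + j) \<notin> S"
      using ab(4) by simp
    then show ?thesis
      using step[of "a + j"] True that by (simp add: \<rho>_def)
  next
    case False
    then have "a + j = b - 1"
      using that by simp
    then show ?thesis
      using f that False by (simp add: \<rho>_def)
  qed
  moreover have "\<rho> 0 = s0"
    using run ab(1,3) unfolding restarting_run_def by (simp add: \<rho>_def)
  ultimately show ?thesis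
    unfolding nfa_lang_def using f(1) by (intro CollectI exI[of _ \<rho>]) (simp add: \<rho>_def)
qed

lemma omega_iter_nfa_langI:
  assumes "restarting_run s0 \<delta> F \<beta> S r"
  shows "\<beta> \<in> omega_iter (nfa_lang s0 \<delta> F)"
proof -
  have S: "0 \<in> S" "infinite S"
    using assms unfolding restarting_run_def by simp_all
  define T where "T = enumerate S"
  have T: "strict_mono T" "range T = S"
    unfolding T_def using S(2) by (simp_all add: strict_mono_enumerate range_enumerate)
  have "T 0 = 0"
    unfolding T_def using S(1) by (simp add: enumerate_0)
  moreover have "map \<beta> [T i..<T (Suc i)] \<in> nfa_lang s0 \<delta> F" for i
  proof (rule restarting_run_segment[OF assms])
    show "T i \<in> S" "T (Suc i) \<in> S" "T i < T (Suc i)"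
      using T by (auto simp: strict_mono_Suc_iff)
    show "\<forall>j. T i < j \<and> j < T (Suc i) \<longrightarrow> j \<notin> S"
      using strict_mono_gap_notin_range[OF T(1)] T(2) by blast
  qed
  ultimately show ?thesis
    using T(1) omega_iter_iff_cuts by blast
qed

lemma omega_iter_nfa_langE:
  assumes "\<beta> \<in> omega_iter (nfa_lang s0 \<delta> F)"
  obtains S r where "restarting_run s0 \<delta> F \<beta> S r"
proof -
  obtain T where T: "strict_mono T" "T 0 = 0" "\<forall>i. map \<beta> [T i..<T (Suc i)] \<in> nfa_lang s0 \<delta> F"
    using assms omega_iter_iff_cuts by blast
  obtain \<rho> where \<rho>: "\<forall>i. \<rho> i 0 = s0 \<and> \<rho> i (T (Suc i) - T i) \<in> F \<and>
      (\<forall>j < T (Suc i) - T i. (\<rho> i j, \<beta> (T i + j), \<rho> i (Suc j)) \<in> \<delta>)"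
    using T(3) unfolding nfa_lang_def by simp metis
  obtain seg where seg_iff: "\<And>m i. seg m = i \<longleftrightarrow> T i \<le> m \<and> m < T (Suc i)"
    using strict_mono_segment_index[OF T(1,2)] by blast
  have seg: "T (seg m) \<le> m \<and> m < T (Suc (seg m))" for m
    using seg_iff by blast
  define r where "r m = \<rho> (seg m) (m - T (seg m))" for m
  have "infinite (range T)"
    using T(1) strict_mono_imp_inj_on range_inj_infinite by blast
  moreover have "r (T i) = s0" for i
  proof -
    have "seg (T i) = i"
      using seg_iff T(1) by (simp add: strict_mono_Suc_iff)
    then show ?thesis
      using \<rho> by (simp add: r_def)
  qed
  moreover have "if Suc m \<in> range T then \<exists>f\<in>F. (r m, \<beta> m, f) \<in> \<delta>
      else (r m, \<beta> m, r (Suc m)) \<in> \<delta>" for m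
  proof -
    let ?i = "seg m"
    have "m - T ?i < T (Suc ?i) - T ?i" "T ?i + (m - T ?i) = m"
      using seg[of m] by auto
    then have step: "(r m, \<beta> m, \<rho> ?i (Suc (m - T ?i))) \<in> \<delta>"
      using \<rho> unfolding r_def by metis
    show ?thesis
    proof (cases "Suc m = T (Suc ?i)")
      case True
      then have "Suc (m - T ?i) = T (Suc ?i) - T ?i"
        using seg[of m] by simp
      then show ?thesis
        using step \<rho> True by (metis rangeI)
    next
      case False
      then have inside: "Suc m < T (Suc ?i)"
        using seg[of m] by simp
      moreover have "Suc m \<notin> range T"
        using strict_mono_gap_notin_range[OF T(1), of ?i "Suc m"] seg[of m] inside by simp
      moreover have "seg (Suc m) = ?i"
        using seg_iff seg[of m] inside by simp
      ultimately show ?thesis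
        using step seg[of m] by (simp add: r_def Suc_diff_le)
    qed
  qed
  ultimately have "restarting_run s0 \<delta> F \<beta> (range T) r"
    unfolding restarting_run_def using T(2) by (auto intro: range_eqI[of 0 T])
  then show ?thesis ..
qed

section \<open>Concatenation\<close>

text \<open>
  In \<open>conc_pa\<close>, state \<open>2 * p + 1\<close> is state \<open>p\<close> of \<open>A\<close>, state \<open>2 * q + 2\<close> is state \<open>q\<close> of the NFA,
  and state \<open>0\<close> is entered whenever a factor in \<open>V\<close> is completed; \<open>nfa_state\<close> reads off the NFA
  state from which the next letter is processed, which is \<open>s0\<close> at \<open>0\<close> and at the end of the
  PA phase.
\<close>

definition nfa_state :: "nat \<Rightarrow> nat \<Rightarrow> nat" where
  "nfa_state s0 x = (if x \<noteq> 0 \<and> even x then x div 2 - 1 else s0)"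

definition nfa_step_source :: "'a pa \<Rightarrow> nat set \<Rightarrow> nat \<Rightarrow> bool" where
  "nfa_step_source A Q x \<longleftrightarrow> x = 0 \<or> (\<exists>p\<in>final A. x = 2 * p + 1) \<or> (\<exists>q\<in>Q. x = 2 * q + 2)"

definition nfa_step_target :: "(nat \<times> 'a \<times> nat) set \<Rightarrow> nat set \<Rightarrow> nat \<Rightarrow> 'a \<Rightarrow> nat \<Rightarrow> bool" where
  "nfa_step_target \<delta> F q a y \<longleftrightarrow> (y = 0 \<and> (\<exists>f\<in>F. (q, a, f) \<in> \<delta>)) \<or> (\<exists>q'. y = 2 * q' + 2 \<and> (q, a, q') \<in> \<delta>)"

definition conc_pa :: "'a pa \<Rightarrow> nat set \<Rightarrow> nat \<Rightarrow> (nat \<times> 'a \<times> nat) set \<Rightarrow> nat set \<Rightarrow> 'a pa" where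
  "conc_pa A Q s0 \<delta> F =
    \<lparr>dim = dim A,
     states = insert 0 ((\<lambda>p. 2 * p + 1) ` states A \<union> (\<lambda>q. 2 * q + 2) ` Q),
     init = 2 * init A + 1,
     trans = (\<lambda>(p, a, v, q). (2 * p + 1, a, v, 2 * q + 1)) ` trans A
       \<union> {(x, a, replicate (dim A) 0, y) | x a y.
           nfa_step_source A Q x \<and> nfa_step_target \<delta> F (nfa_state s0 x) a y},
     final = {0},
     constr = constr A\<rparr>"

lemma conc_pa_simps [simp]:
  "dim (conc_pa A Q s0 \<delta> F) = dim A"
  "init (conc_pa A Q s0 \<delta> F) = 2 * init A + 1"
  "final (conc_pa A Q s0 \<delta> F) = {0}"
  "constr (conc_pa A Q s0 \<delta> F) = constr A"
  by (simp_all add: conc_pa_def)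

lemma nfa_state_simps [simp]:
  "nfa_state s0 0 = s0"
  "odd x \<Longrightarrow> nfa_state s0 x = s0"
  "nfa_state s0 (Suc (Suc (2 * q))) = q"
  by (auto simp: nfa_state_def)

lemma nfa_step_target_imp_even: "nfa_step_target \<delta> F q a y \<Longrightarrow> even y"
  by (auto simp: nfa_step_target_def)

lemma trans_conc_pa_into_odd:
  "odd y \<Longrightarrow> (x, a, v, y) \<in> trans (conc_pa A Q s0 \<delta> F) \<longleftrightarrow>
    odd x \<and> (x div 2, a, v, y div 2) \<in> trans A"
  by (auto simp: conc_pa_def image_iff dest: nfa_step_target_imp_even elim!: oddE)

lemma trans_conc_pa_into_even:
  "even y \<Longrightarrow> (x, a, v, y) \<in> trans (conc_pa A Q s0 \<delta> F) \<longleftrightarrow>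
    nfa_step_source A Q x \<and> nfa_step_target \<delta> F (nfa_state s0 x) a y \<and> v = replicate (dim A) 0"
  by (auto simp: conc_pa_def)

lemma pa_wf_conc_pa:
  assumes "finite \<Sigma>" "pa_wf \<Sigma> A" "finite Q" "\<delta> \<subseteq> Q \<times> \<Sigma> \<times> Q"
  shows "pa_wf \<Sigma> (conc_pa A Q s0 \<delta> F)"
proof -
  let ?S = "states (conc_pa A Q s0 \<delta> F)"
  have nfa_step_in_states: "x \<in> ?S \<and> a \<in> \<Sigma> \<and> y \<in> ?S"
    if "nfa_step_source A Q x" "nfa_step_target \<delta> F (nfa_state s0 x) a y" for x a y
  proof -
    have "x \<in> ?S"
      using that(1) assms(2) unfolding nfa_step_source_def pa_wf_def by (auto simp: conc_pa_def)
    moreover have "a \<in> \<Sigma> \<and> y \<in> ?S"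
      using that(2) assms(4) unfolding nfa_step_target_def by (auto simp: conc_pa_def)
    ultimately show ?thesis
      by blast
  qed
  have "trans (conc_pa A Q s0 \<delta> F)
      \<subseteq> (\<lambda>(p, a, v, q). (2 * p + 1, a, v, 2 * q + 1)) ` trans A
        \<union> ?S \<times> \<Sigma> \<times> {replicate (dim A) 0} \<times> ?S"
    using nfa_step_in_states by (auto simp: conc_pa_def)
  moreover have "finite ?S"
    using assms(2,3) unfolding conc_pa_def pa_wf_def by simp
  ultimately have "finite (trans (conc_pa A Q s0 \<delta> F))"
    using assms(1,2) unfolding pa_wf_def by (simp add: finite_subset)
  moreover have "\<forall>(p, a, v, q) \<in> trans (conc_pa A Q s0 \<delta> F).
      p \<in> ?S \<and> a \<in> \<Sigma> \<and> length v = dim A \<and> q \<in> ?S"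
    using assms(2) nfa_step_in_states unfolding pa_wf_def by (auto simp: conc_pa_def)
  ultimately show ?thesis
    using assms(2,3) unfolding pa_wf_def by (simp add: conc_pa_def)
qed

lemma trans_conc_pa_restarting_run:
  assumes "\<delta> \<subseteq> Q \<times> \<Sigma> \<times> Q" "restarting_run s0 \<delta> F \<beta> S r"
    and "nfa_step_source A Q x0" "nfa_state s0 x0 = s0"
  defines "P \<equiv> \<lambda>m. if m = 0 then x0 else if m \<in> S then 0 else 2 * r m + 2"
  shows "(P m, \<beta> m, replicate (dim A) 0, P (Suc m)) \<in> trans (conc_pa A Q s0 \<delta> F)"
proof -
  have S: "0 \<in> S" "\<forall>m\<in>S. r m = s0"
    and step: "\<And>m. if Suc m \<in> S then \<exists>f\<in>F. (r m, \<beta> m, f) \<in> \<delta>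
      else (r m, \<beta> m, r (Suc m)) \<in> \<delta>"
    using assms(2) unfolding restarting_run_def by blast+
  have "nfa_step_source A Q (P m) \<and> nfa_state s0 (P m) = r m"
  proof (cases "m \<in> S")
    case True
    then show ?thesis
      using assms(3,4) S by (auto simp: P_def nfa_step_source_def)
  next
    case False
    then obtain m' where m': "m = Suc m'"
      using S(1) by (cases m) auto
    then have "r m \<in> Q"
      using step[of m'] False assms(1) by auto
    then show ?thesis
      using False S(1) by (auto simp: P_def nfa_step_source_def)
  qed
  moreover have "nfa_step_target \<delta> F (r m) (\<beta> m) (P (Suc m))"
    using step[of m] by (auto simp: P_def nfa_step_target_def split: if_splits)
  moreover have "even (P (Suc m))"
    by (simp add: P_def)
  ultimately show ?thesis
    by (simp add: trans_conc_pa_into_even)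
qed

lemma rpba_accepts_conc_paI:
  assumes "\<delta> \<subseteq> Q \<times> \<Sigma> \<times> Q" "pa_accepts A u" "restarting_run s0 \<delta> F \<beta> S r"
  shows "rpba_accepts (conc_pa A Q s0 \<delta> F) (conc_inf u \<beta>)"
proof -
  define k where "k = length u"
  obtain pA vsA where A: "length vsA = k" "pA 0 = init A"
    "\<forall>i<k. (pA i, u ! i, vsA ! i, pA (Suc i)) \<in> trans A" "pA k \<in> final A" "vsum (dim A) vsA \<in> constr A"
    using assms(2) unfolding pa_accepts_def k_def by blast
  define Pv where "Pv = (\<lambda>m. if m = 0 then 2 * pA k + 1 else if m \<in> S then 0 else 2 * r m + 2)"
  define P where "P n = (if n < k then 2 * pA n + 1 else Pv (n - k))" for n
  define VS where "VS n = (if n < k then vsA ! n else replicate (dim A) 0)" for n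
  have "(P n, conc_inf u \<beta> n, VS n, P (Suc n)) \<in> trans (conc_pa A Q s0 \<delta> F)" for n
  proof (cases "n < k")
    case True
    then have "Suc n < k \<or> Suc n = k"
      by linarith
    then have "P n = 2 * pA n + 1" "P (Suc n) = 2 * pA (Suc n) + 1"
      using True by (auto simp: P_def Pv_def)
    with True A(3) show ?thesis
      by (simp add: trans_conc_pa_into_odd conc_inf_def k_def VS_def)
  next
    case False
    then obtain m where n: "n = k + m"
      using le_Suc_ex not_less by blast
    have "(Pv m, \<beta> m, replicate (dim A) 0, Pv (Suc m)) \<in> trans (conc_pa A Q s0 \<delta> F)"
      unfolding Pv_def using assms(1,3) A(4)
      by (intro trans_conc_pa_restarting_run) (auto simp: nfa_step_source_def)
    then show ?thesis
      by (simp add: n P_def VS_def conc_inf_def k_def)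
  qed
  moreover have "\<exists>\<^sub>\<infinity>n. P n \<in> final (conc_pa A Q s0 \<delta> F) \<and> vsum (dim A) (map VS [0..<n]) \<in> constr A"
    unfolding INFM_nat
  proof
    fix N
    obtain s where s: "N < s" "s \<in> S"
      using assms(3) unfolding restarting_run_def infinite_nat_iff_unbounded by blast
    have "map VS [0..<k] = vsA"
      using A(1) by (intro nth_equalityI) (simp_all add: VS_def)
    then have "vsum (dim A) (map VS [0..<k + s]) = vsum (dim A) vsA"
      using vsum_upt_zero_tail[of k "k + s" VS] by (simp add: VS_def)
    with s A(5) show "\<exists>n>N. P n \<in> final (conc_pa A Q s0 \<delta> F) \<and> vsum (dim A) (map VS [0..<n]) \<in> constr A"
      by (intro exI[of _ "k + s"]) (simp add: P_def Pv_def)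
  qed
  ultimately show ?thesis
    using A(2) by (intro rpba_acceptsI) (simp_all add: P_def Pv_def)
qed

lemma conc_pa_run_odd_prefix:
  assumes run: "\<forall>n. (p n, \<alpha> n, vs n, p (Suc n)) \<in> trans (conc_pa A Q s0 \<delta> F)"
    and "odd (p 0)" "even (p i)"
  obtains k where "k < i" "\<And>m. odd (p m) \<longleftrightarrow> m \<le> k"
proof -
  have odd_pred: "odd (p n)" if "odd (p (Suc n))" for n
    using run[rule_format, of n] that by (simp add: trans_conc_pa_into_odd)
  have "\<exists>m. even (p (Suc m))"
    using assms(2,3) by (cases i) auto
  define k where "k = (LEAST m. even (p (Suc m)))"
  have "odd (p m)" if "m \<le> k" for m
  proof (cases m)
    case 0
    then show ?thesis using assms(2) by simp
  next
    case (Suc m')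
    then show ?thesis
      using that not_less_Least[of m' "\<lambda>m. even (p (Suc m))"] by (simp add: k_def)
  qed
  moreover have "even (p (Suc k + j))" for j
  proof (induction j)
    case 0
    then show ?case
      using LeastI_ex[OF \<open>\<exists>m. even (p (Suc m))\<close>] by (simp add: k_def)
  next
    case (Suc j)
    then show ?case
      using odd_pred[of "Suc k + j"] by auto
  qed
  then have "even (p m)" if "k < m" for m
    using that less_iff_Suc_add by auto
  ultimately have "odd (p m) \<longleftrightarrow> m \<le> k" for m
    using not_le by blast
  moreover from this have "k < i"
    using assms(3) not_le by blast
  ultimately show ?thesis
    using that by blast
qed

lemma pa_accepts_prefix_of_conc_pa_run:
  assumes run: "\<forall>n. (p n, \<alpha> n, vs n, p (Suc n)) \<in> trans (conc_pa A Q s0 \<delta> F)"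
    and "p 0 = 2 * init A + 1" "\<And>m. odd (p m) \<longleftrightarrow> m \<le> k"
    and "k < i" "vsum (dim A) (map vs [0..<i]) \<in> constr A"
  shows "pa_accepts A (map \<alpha> [0..<k])"
proof -
  have "(p m div 2, \<alpha> m, vs m, p (Suc m) div 2) \<in> trans A" if "m < k" for m
    using run[rule_format, of m] assms(3) that by (simp add: trans_conc_pa_into_odd)
  moreover have "p k div 2 \<in> final A"
  proof -
    have "nfa_step_source A Q (p k)"
      using run[rule_format, of k] assms(3)[of "Suc k"] by (simp add: trans_conc_pa_into_even)
    with assms(3)[of k] show ?thesis
      by (auto simp: nfa_step_source_def)
  qed
  moreover have "vs m = replicate (dim A) 0" if "k \<le> m" for m
    using run[rule_format, of m] assms(3)[of "Suc m"] that by (simp add: trans_conc_pa_into_even)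
  then have "vsum (dim A) (map vs [0..<i]) = vsum (dim A) (map vs [0..<k])"
    using assms(4) by (intro vsum_upt_zero_tail) simp_all
  ultimately show ?thesis
    unfolding pa_accepts_def using assms(2,5)
    by (intro exI[of _ "\<lambda>m. p m div 2"] exI[of _ "map vs [0..<k]"]) simp
qed

lemma restarting_run_of_conc_pa_run:
  assumes run: "\<forall>n. (p n, \<alpha> n, vs n, p (Suc n)) \<in> trans (conc_pa A Q s0 \<delta> F)"
    and "\<And>m. odd (p m) \<longleftrightarrow> m \<le> k" "\<exists>\<^sub>\<infinity>j. p j = 0"
  shows "restarting_run s0 \<delta> F (\<lambda>m. \<alpha> (k + m)) (insert 0 {m. p (k + m) = 0}) (\<lambda>m. nfa_state s0 (p (k + m)))"
proof -
  have "infinite {m. p (k + m) = 0}"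
    unfolding infinite_nat_iff_unbounded
  proof
    fix N
    obtain j where "k + N < j" "p j = 0"
      using assms(3) unfolding INFM_nat by blast
    then show "\<exists>m>N. m \<in> {m. p (k + m) = 0}"
      by (intro exI[of _ "j - k"]) auto
  qed
  moreover have "\<forall>m\<in>insert 0 {m. p (k + m) = 0}. nfa_state s0 (p (k + m)) = s0"
    using assms(2)[of k] by auto
  moreover have "if Suc m \<in> insert 0 {m. p (k + m) = 0}
      then \<exists>f\<in>F. (nfa_state s0 (p (k + m)), \<alpha> (k + m), f) \<in> \<delta>
      else (nfa_state s0 (p (k + m)), \<alpha> (k + m), nfa_state s0 (p (k + Suc m))) \<in> \<delta>" for m
  proof -
    have "nfa_step_target \<delta> F (nfa_state s0 (p (k + m))) (\<alpha> (k + m)) (p (k + Suc m))"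
      using run[rule_format, of "k + m"] assms(2)[of "k + Suc m"] by (simp add: trans_conc_pa_into_even)
    then show ?thesis
      by (auto simp: nfa_step_target_def)
  qed
  ultimately show ?thesis
    unfolding restarting_run_def finite_insert by blast
qed

lemma rpba_accepts_conc_paD:
  assumes "rpba_accepts (conc_pa A Q s0 \<delta> F) \<alpha>"
  shows "\<alpha> \<in> lang_conc {w. pa_accepts A w} (omega_iter (nfa_lang s0 \<delta> F))"
proof -
  obtain p vs i where run: "p 0 = 2 * init A + 1" "\<forall>n. (p n, \<alpha> n, vs n, p (Suc n)) \<in> trans (conc_pa A Q s0 \<delta> F)"
    and reach: "p i = 0" "vsum (dim A) (map vs [0..<i]) \<in> constr A"
    and buchi: "\<exists>\<^sub>\<infinity>j. p j = 0"
    using assms unfolding rpba_accepts_def by auto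
  have "odd (p 0)" "even (p i)"
    using run(1) reach(1) by simp_all
  then obtain k where k: "k < i" "\<And>m. odd (p m) \<longleftrightarrow> m \<le> k"
    by (rule conc_pa_run_odd_prefix[OF run(2)]) blast
  have "pa_accepts A (map \<alpha> [0..<k])"
    using pa_accepts_prefix_of_conc_pa_run[OF run(2,1) k(2,1) reach(2)] .
  moreover have "(\<lambda>m. \<alpha> (k + m)) \<in> omega_iter (nfa_lang s0 \<delta> F)"
    using restarting_run_of_conc_pa_run[OF run(2) k(2) buchi] by (rule omega_iter_nfa_langI)
  moreover have "\<alpha> = conc_inf (map \<alpha> [0..<k]) (\<lambda>m. \<alpha> (k + m))"
    by (auto simp: conc_inf_def)
  ultimately show ?thesis
    unfolding lang_conc_def by blast
qed

lemma rpba_recognizable_conc: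
  assumes "finite \<Sigma>" "parikh_recognizable \<Sigma> U" "regular \<Sigma> V"
  shows "rpba_recognizable \<Sigma> (lang_conc U (omega_iter V))"
proof -
  obtain A where A: "pa_wf \<Sigma> A" "U = {w. pa_accepts A w}"
    using assms(2) unfolding parikh_recognizable_def by blast
  obtain Q s0 \<delta> F where N: "finite Q" "\<delta> \<subseteq> Q \<times> \<Sigma> \<times> Q" "V = nfa_lang s0 \<delta> F"
    using assms(3) unfolding regular_def nfa_lang_def by blast
  have "lang_conc U (omega_iter V) = {\<alpha>. rpba_accepts (conc_pa A Q s0 \<delta> F) \<alpha>}"
  proof (intro equalityI subsetI)
    fix \<alpha>
    assume "\<alpha> \<in> lang_conc U (omega_iter V)"
    then obtain u \<beta> S r where "\<alpha> = conc_inf u \<beta>" "pa_accepts A u" "restarting_run s0 \<delta> F \<beta> S r"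
      unfolding lang_conc_def A(2) N(3) by (blast elim: omega_iter_nfa_langE)
    with N(2) show "\<alpha> \<in> {\<alpha>. rpba_accepts (conc_pa A Q s0 \<delta> F) \<alpha>}"
      by (simp add: rpba_accepts_conc_paI)
  next
    fix \<alpha>
    assume "\<alpha> \<in> {\<alpha>. rpba_accepts (conc_pa A Q s0 \<delta> F) \<alpha>}"
    then show "\<alpha> \<in> lang_conc U (omega_iter V)"
      unfolding A(2) N(3) by (simp add: rpba_accepts_conc_paD)
  qed
  with pa_wf_conc_pa[OF assms(1) A(1) N(1,2)] show ?thesis
    unfolding rpba_recognizable_def by blast
qed

theorem corollary2:
  fixes \<Sigma> :: "'a set" and n :: nat and U V :: "nat \<Rightarrow> 'a list set"
  assumes "finite \<Sigma>"
    and "\<forall>i \<in> {1..n}. parikh_recognizable \<Sigma> (U i)"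
    and "\<forall>i \<in> {1..n}. regular \<Sigma> (V i)"
  shows "rpba_recognizable \<Sigma> (\<Union>i \<in> {1..n}. lang_conc (U i) (omega_iter (V i)))"
proof -
  have "\<forall>i \<in> {1..n}. rpba_recognizable \<Sigma> (lang_conc (U i) (omega_iter (V i)))"
    using assms by (simp add: rpba_recognizable_conc)
  then show ?thesis
    by (rule rpba_recognizable_UN[OF finite_atLeastAtMost])
qed

end
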